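(* Let $\mathcal H$ be a well-structured preconditioner set and $M\in\mathcal S^d_{++}$. Then the Frobenius-norm projection of $M$ onto $\mathcal H$, $\operatorname{proj}_{\mathcal H}(M)=\arg\min_{H\in\mathcal H}\|M-H\|_F^2$, equals $P_{\mathcal H}(M)^2$.
   Context: $\mathcal S^d_+$ (resp. $\mathcal S^d_{++}$) denotes the set of real symmetric positive semidefinite (resp. positive definite) $d\times d$ matrices; $\langle A,B\rangle=\operatorname{Tr}(A^\top B)$. A set $\mathcal H\subseteq\mathcal S_+^d$ is a well-structured preconditioner set if $\mathcal H=\mathcal S_+^d\cap\mathcal K$ for some set $\mathcal K$ of real $d\times d$ matrices that is closed under scalar multiplication, matrix addition and matrix multiplication and contains the identity $I_d$. For $M\in\mathcal S^d_{++}$, $P_{\mathcal H}(M):=\arg\min_{H\in\mathcal H\cap\mathcal S^d_{++}}\langle M,H^{-1}\rangle+\operatorname{Tr}(H)$ (the minimizer exists and is unique). *)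

theory Defs
  imports "HOL-Analysis.Analysis"
begin

definition psd :: "real^'d^'d \<Rightarrow> bool" where
  "psd A \<longleftrightarrow> transpose A = A \<and> (\<forall>x. 0 \<le> x \<bullet> (A *v x))"

definition pd :: "real^'d^'d \<Rightarrow> bool" where
  "pd A \<longleftrightarrow> transpose A = A \<and> (\<forall>x. x \<noteq> 0 \<longrightarrow> 0 < x \<bullet> (A *v x))"

definition frob_inner :: "real^'d^'d \<Rightarrow> real^'d^'d \<Rightarrow> real" where
  "frob_inner A B = trace (transpose A ** B)"

definition frob_norm_sq :: "real^'d^'d \<Rightarrow> real" where
  "frob_norm_sq A = frob_inner A A"

definition matrix_closed_set :: "(real^'d^'d) set \<Rightarrow> bool" where
  "matrix_closed_set K \<longleftrightarrow>
     (\<forall>c A. A \<in> K \<longrightarrow> c *\<^sub>R A \<in> K) \<and>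
     (\<forall>A B. A \<in> K \<longrightarrow> B \<in> K \<longrightarrow> A + B \<in> K) \<and>
     (\<forall>A B. A \<in> K \<longrightarrow> B \<in> K \<longrightarrow> A ** B \<in> K) \<and>
     mat 1 \<in> K"

definition well_structured :: "(real^'d^'d) set \<Rightarrow> bool" where
  "well_structured \<H> \<longleftrightarrow> (\<exists>K. matrix_closed_set K \<and> \<H> = {A. psd A} \<inter> K)"

definition precond_P :: "(real^'d^'d) set \<Rightarrow> real^'d^'d \<Rightarrow> real^'d^'d" where
  "precond_P \<H> M = (THE H. H \<in> \<H> \<and> pd H \<and>
      (\<forall>H'. H' \<in> \<H> \<and> pd H' \<longrightarrow>
         frob_inner M (matrix_inv H) + trace H \<le> frob_inner M (matrix_inv H') + trace H'))"

definition frob_proj :: "(real^'d^'d) set \<Rightarrow> real^'d^'d \<Rightarrow> real^'d^'d" where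
  "frob_proj \<H> M = (THE H. H \<in> \<H> \<and>
      (\<forall>H'. H' \<in> \<H> \<longrightarrow> frob_norm_sq (M - H) \<le> frob_norm_sq (M - H')))"

end

theory Submission
  imports Defs
begin

text \<open>
  As a unital matrix algebra, \<open>K\<close> is a linear subspace, so \<open>\<H> = S\<^sub>+ \<inter> K\<close> is closed
  and contains a point \<open>Q\<close> nearest to \<open>M\<close>. Any real function of the eigenvalues of a
  symmetric \<open>S \<in> K\<close> is an interpolating polynomial in \<open>S\<close>, hence again lies in \<open>K\<close>.
  Therefore \<open>Q\<close> is positive definite: otherwise the projector \<open>E\<close> onto its kernel lies
  in \<open>\<H>\<close>, and since \<open><Q, E> = 0 < <M, E>\<close>, moving from \<open>Q\<close> towards \<open>Q + E\<close> would
  bring it closer to \<open>M\<close>. A positive definite \<open>Q\<close> can be perturbed within \<open>\<H>\<close> in both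
  directions along any symmetric \<open>D \<in> K\<close>, so \<open><M - Q, D> = 0\<close>; by Pythagoras this makes
  \<open>Q\<close> the unique Frobenius projection. With \<open>P\<close> the square root of \<open>Q\<close> (so that \<open>P\<close> and
  \<open>R = P\<^sup>-\<^sup>1\<close> lie in \<open>K\<close>) and \<open>X = A R - I\<close>, the same orthogonality gives
  \<open><M, A\<^sup>-\<^sup>1> + tr A = <M, X\<^sup>T A\<^sup>-\<^sup>1 X> + 2 tr P\<close>, whose first term is nonnegative
  and vanishes only for \<open>A = P\<close>; hence \<open>P\<^sub>\<H>(M) = P\<close>.
\<close>

lemma frob_inner_eq_inner: "frob_inner A B = A \<bullet> B"
  unfolding frob_inner_def trace_def matrix_matrix_mult_def transpose_def inner_vec_def
  by (simp add: sum_distrib_left) (rule sum.swap)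

lemma frob_norm_sq_eq_norm: "frob_norm_sq A = (norm A)\<^sup>2"
  by (simp add: frob_norm_sq_def frob_inner_eq_inner power2_norm_eq_inner)

lemma trace_symmetric_mult_eq_inner:
  "transpose A = A \<Longrightarrow> trace (A ** B) = A \<bullet> B"
  by (metis frob_inner_def frob_inner_eq_inner)

lemma transpose_add: "transpose (A + B) = transpose A + transpose B"
  by (simp add: transpose_def vec_eq_iff)

lemma transpose_diff: "transpose (A - B) = transpose A - transpose B"
  by (simp add: transpose_def vec_eq_iff)

lemma matrix_diff_ldistrib: "(A :: 'a::ring_1^'n^'m) ** (B - C) = A ** B - A ** C"
  by (vector matrix_matrix_mult_def sum_subtractf[symmetric] field_simps)

lemma matrix_diff_rdistrib: "((A :: 'a::ring_1^'n^'m) - B) ** C = A ** C - B ** C"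
  by (vector matrix_matrix_mult_def sum_subtractf[symmetric] field_simps)

lemma inner_transpose_matrix: "x \<bullet> (transpose A *v y) = (A *v x) \<bullet> (y::real^'n)"
  by (metis dot_lmul_matrix inner_commute transpose_matrix_vector)

lemma symmetric_inner_swap: "transpose A = A \<Longrightarrow> x \<bullet> (A *v y) = y \<bullet> (A *v (x::real^'n))"
  by (metis inner_commute inner_transpose_matrix)

lemma inner_axis_matrix_axis: "axis i 1 \<bullet> (A *v axis j 1) = (A::real^'n^'m) $ i $ j"
  by (simp add: inner_axis' matrix_vector_mul_component inner_axis)

lemma matrix_inv_eqI:
  fixes A B :: "'a::field^'n^'n"
  assumes "A ** B = mat 1"
  shows "matrix_inv A = B"
proof -
  have BA: "B ** A = mat 1" using assms matrix_left_right_inverse by blast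
  have "A ** matrix_inv A = mat 1 \<and> matrix_inv A ** A = mat 1"
    unfolding matrix_inv_def by (rule someI[of _ B]) (simp add: assms BA)
  hence "matrix_inv A = (B ** A) ** matrix_inv A" using BA by simp
  also have "\<dots> = B" by (simp add: matrix_mul_assoc[symmetric] \<open>_ \<and> _\<close>)
  finally show ?thesis .
qed

lemma nonpos_if_le_quadratic:
  fixes a e \<delta> :: real
  assumes "\<delta> > 0" "\<And>t. 0 < t \<Longrightarrow> t < \<delta> \<Longrightarrow> t * a \<le> t\<^sup>2 * e"
  shows "a \<le> 0"
proof -
  have "eventually (\<lambda>t. a \<le> t * e) (at_right 0)"
    unfolding eventually_at_right_field
    using assms by (intro exI[of _ \<delta>]) (auto simp: power2_eq_square mult.assoc)
  moreover have "((\<lambda>t. t * e) \<longlongrightarrow> 0) (at_right (0::real))"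
    by (auto intro!: tendsto_eq_intros)
  ultimately show ?thesis
    by (intro tendsto_lowerbound[of "\<lambda>t. t * e" 0 "at_right 0"]) auto
qed

lemma zero_if_le_quadratic:
  fixes a e \<delta> :: real
  assumes "\<delta> > 0" "\<And>t. \<bar>t\<bar> < \<delta> \<Longrightarrow> t * a \<le> t\<^sup>2 * e"
  shows "a = 0"
proof -
  have "a \<le> 0" using assms by (intro nonpos_if_le_quadratic[of \<delta> _ e]) auto
  moreover have "-a \<le> 0"
    using assms(1) assms(2)[of "- _"] by (intro nonpos_if_le_quadratic[of \<delta> _ e]) auto
  ultimately show ?thesis by simp
qed

section \<open>Orthonormal eigenbases and the spectral theorem\<close>

definition orthonormal_basis :: "(real^'n) set \<Rightarrow> bool" where
  "orthonormal_basis B \<longleftrightarrow>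
     finite B \<and> span B = UNIV \<and> pairwise orthogonal B \<and> (\<forall>b\<in>B. norm b = 1)"

definition orthonormal_eigenbasis :: "(real^'n) set \<Rightarrow> real^'n^'n \<Rightarrow> (real^'n \<Rightarrow> real) \<Rightarrow> bool" where
  "orthonormal_eigenbasis B A \<mu> \<longleftrightarrow> orthonormal_basis B \<and> (\<forall>b\<in>B. A *v b = \<mu> b *\<^sub>R b)"

lemma orthonormal_basis_expansion:
  "orthonormal_basis B \<Longrightarrow> (\<Sum>b\<in>B. (x \<bullet> b) *\<^sub>R b) = x"
  unfolding orthonormal_basis_def by (intro orthonormal_basis_expand) auto

lemma orthonormal_basis_inner:
  assumes "orthonormal_basis B" "b \<in> B" "c \<in> B"
  shows "b \<bullet> c = (if b = c then 1 else 0)"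
  using assms unfolding orthonormal_basis_def pairwise_def orthogonal_def
  by (auto simp: dot_square_norm)

lemma orthonormal_basis_matrix_eqI:
  assumes "orthonormal_basis B" "\<And>b. b \<in> B \<Longrightarrow> A *v b = C *v b"
  shows "A = C"
proof -
  have "span B = UNIV" using assms(1) by (simp add: orthonormal_basis_def)
  thus ?thesis unfolding matrix_eq
    using linear_eq_on[OF matrix_vector_mul_linear matrix_vector_mul_linear _ assms(2)] by blast
qed

lemma orthonormal_basis_trace:
  assumes "orthonormal_basis B"
  shows "trace A = (\<Sum>b\<in>B. b \<bullet> (A *v b))"
proof -
  have "trace A = (\<Sum>i\<in>UNIV. axis i 1 \<bullet> (A *v axis i 1))"
    by (simp add: trace_def inner_axis_matrix_axis)
  also have "\<dots> = (\<Sum>i\<in>UNIV. \<Sum>b\<in>B. b $ i * (A *v b) $ i)"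
  proof (rule sum.cong[OF refl])
    fix i
    have "A *v axis i 1 = A *v (\<Sum>b\<in>B. b $ i *\<^sub>R b)"
      using orthonormal_basis_expansion[OF assms, of "axis i 1"] by (simp add: inner_axis')
    hence "A *v axis i 1 = (\<Sum>b\<in>B. b $ i *\<^sub>R (A *v b))"
      by (simp add: linear_sum[OF matrix_vector_mul_linear] matrix_vector_mult_scaleR)
    thus "axis i 1 \<bullet> (A *v axis i 1) = (\<Sum>b\<in>B. b $ i * (A *v b) $ i)"
      by (simp add: inner_sum_right inner_axis')
  qed
  also have "\<dots> = (\<Sum>b\<in>B. b \<bullet> (A *v b))"
    by (subst sum.swap) (simp add: inner_vec_def)
  finally show ?thesis .
qed

lemma orthonormal_eigenbasis_apply:
  assumes "orthonormal_eigenbasis B A \<mu>"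
  shows "A *v x = (\<Sum>b\<in>B. (\<mu> b * (x \<bullet> b)) *\<^sub>R b)"
proof -
  have "A *v x = A *v (\<Sum>b\<in>B. (x \<bullet> b) *\<^sub>R b)"
    using assms orthonormal_basis_expansion by (metis orthonormal_eigenbasis_def)
  also have "\<dots> = (\<Sum>b\<in>B. (\<mu> b * (x \<bullet> b)) *\<^sub>R b)"
    using assms unfolding orthonormal_eigenbasis_def
    by (simp add: linear_sum[OF matrix_vector_mul_linear] matrix_vector_mult_scaleR mult.commute
        cong: sum.cong)
  finally show ?thesis .
qed

lemma orthonormal_eigenbasis_quadratic_form:
  assumes "orthonormal_eigenbasis B A \<mu>"
  shows "x \<bullet> (A *v y) = (\<Sum>b\<in>B. \<mu> b * (x \<bullet> b) * (y \<bullet> b))"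
  by (simp add: orthonormal_eigenbasis_apply[OF assms] inner_sum_right inner_commute mult_ac)

lemma orthonormal_eigenbasis_eigenvalue:
  assumes "orthonormal_eigenbasis B A \<mu>" "b \<in> B"
  shows "\<mu> b = b \<bullet> (A *v b)"
  using assms orthonormal_basis_inner[of B b b] by (simp add: orthonormal_eigenbasis_def)

lemma orthonormal_eigenbasis_symmetric:
  assumes "orthonormal_eigenbasis B A \<mu>"
  shows "transpose A = A"
proof -
  have "A $ i $ j = A $ j $ i" for i j
    using orthonormal_eigenbasis_quadratic_form[OF assms, of "axis i 1" "axis j 1"]
      orthonormal_eigenbasis_quadratic_form[OF assms, of "axis j 1" "axis i 1"]
    by (simp add: inner_axis_matrix_axis mult_ac)
  thus ?thesis by (simp add: transpose_def vec_eq_iff)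
qed

lemma orthonormal_eigenbasis_psd:
  assumes "orthonormal_eigenbasis B A \<mu>" "\<And>b. b \<in> B \<Longrightarrow> 0 \<le> \<mu> b"
  shows "psd A"
  unfolding psd_def
  using orthonormal_eigenbasis_symmetric[OF assms(1)] assms(2)
  by (simp add: orthonormal_eigenbasis_quadratic_form[OF assms(1)] mult.assoc sum_nonneg)

lemma orthonormal_eigenbasis_pd:
  fixes A :: "real^'n^'n"
  assumes "orthonormal_eigenbasis B A \<mu>" "\<And>b. b \<in> B \<Longrightarrow> 0 < \<mu> b"
  shows "pd A"
  unfolding pd_def
proof (intro conjI allI impI)
  show "transpose A = A" using orthonormal_eigenbasis_symmetric[OF assms(1)] .
  fix x :: "real^'n" assume "x \<noteq> 0"
  have B: "orthonormal_basis B" using assms(1) by (simp add: orthonormal_eigenbasis_def)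
  then obtain c where c: "c \<in> B" "x \<bullet> c \<noteq> 0"
    using orthonormal_basis_expansion[OF B, of x] \<open>x \<noteq> 0\<close>
    by (metis (no_types, lifting) scale_zero_left sum.neutral)
  have "0 < (\<Sum>b\<in>B. \<mu> b * (x \<bullet> b)\<^sup>2)"
    using B c assms(2) unfolding orthonormal_basis_def
    by (intro sum_pos2[of B c]) (auto simp: less_imp_le[OF assms(2)])
  thus "0 < x \<bullet> (A *v x)"
    by (simp add: orthonormal_eigenbasis_quadratic_form[OF assms(1)] power2_eq_square mult.assoc)
qed

lemma symmetric_matrix_eigenvector_in_invariant_subspace:
  fixes A :: "real^'n^'n"
  assumes sym: "transpose A = A" and S: "subspace S" and inv: "\<And>x. x \<in> S \<Longrightarrow> A *v x \<in> S"
    and nontrivial: "S \<noteq> {0}"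
  obtains v where "v \<in> S" "norm v = 1" "A *v v = (v \<bullet> (A *v v)) *\<^sub>R v"
proof -
  let ?q = "\<lambda>x. x \<bullet> (A *v x)"
  obtain x0 where x0: "x0 \<in> S" "x0 \<noteq> 0" using nontrivial subspace_0[OF S] by blast
  have "x0 /\<^sub>R norm x0 \<in> S \<inter> sphere 0 1" using x0 S by (simp add: subspace_scale)
  moreover have "compact (S \<inter> sphere 0 1)"
    using closed_subspace[OF S] compact_sphere by (rule closed_Int_compact)
  moreover have "continuous_on (S \<inter> sphere 0 1) ?q"
    by (intro continuous_intros linear_continuous_on matrix_vector_mul_bounded_linear)
  ultimately obtain v where "v \<in> S \<inter> sphere 0 1" and max: "\<forall>y\<in>S \<inter> sphere 0 1. ?q y \<le> ?q v"
    using continuous_attains_sup[of "S \<inter> sphere 0 1" ?q] by (metis empty_iff)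
  hence v: "v \<in> S" "norm v = 1" by auto
  have vv: "v \<bullet> v = 1" using v(2) by (simp add: dot_square_norm)
  define c where "c = ?q v"
  have bound: "?q y \<le> c * (y \<bullet> y)" if "y \<in> S" for y
  proof (cases "y = 0")
    case False
    have "y /\<^sub>R norm y \<in> S \<inter> sphere 0 1" using that False S by (simp add: subspace_scale)
    hence "?q (y /\<^sub>R norm y) \<le> c" using max by (simp only: c_def)
    thus ?thesis using False
      by (simp add: matrix_vector_mult_scaleR power2_norm_eq_inner[symmetric] field_simps power2_eq_square)
  qed simp
  \<comment> \<open>\<open>v\<close> maximises the Rayleigh quotient on \<open>S\<close>;
    optimality in the direction \<open>w\<close> forces \<open>w = 0\<close>\<close>
  define w where "w = A *v v - c *\<^sub>R v"
  have wS: "w \<in> S" using inv v S by (simp add: w_def subspace_diff subspace_scale)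
  have "t * (2 * (w \<bullet> w)) \<le> t\<^sup>2 * (c * (w \<bullet> w) - ?q w)" for t
  proof -
    have "v + t *\<^sub>R w \<in> S" using v wS S by (simp add: subspace_add subspace_scale)
    hence le: "?q (v + t *\<^sub>R w) \<le> c * ((v + t *\<^sub>R w) \<bullet> (v + t *\<^sub>R w))" by (rule bound)
    have q_expand: "?q (v + t *\<^sub>R w) = c + 2 * t * (w \<bullet> (A *v v)) + t\<^sup>2 * ?q w"
      using symmetric_inner_swap[OF sym, of v w] by (simp add: c_def power2_eq_square algebra_simps)
    have norm_expand: "(v + t *\<^sub>R w) \<bullet> (v + t *\<^sub>R w) = 1 + 2 * t * (w \<bullet> v) + t\<^sup>2 * (w \<bullet> w)"
      using vv by (simp add: inner_commute power2_eq_square algebra_simps)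
    have "w \<bullet> (A *v v) = w \<bullet> w + c * (w \<bullet> v)" by (simp add: w_def inner_diff_right)
    with le have "c + 2 * t * (w \<bullet> w + c * (w \<bullet> v)) + t\<^sup>2 * ?q w
        \<le> c * (1 + 2 * t * (w \<bullet> v) + t\<^sup>2 * (w \<bullet> w))"
      by (simp only: q_expand norm_expand)
    thus ?thesis by (simp add: algebra_simps)
  qed
  hence "2 * (w \<bullet> w) = 0" by (intro zero_if_le_quadratic[of 1]) auto
  hence "A *v v = c *\<^sub>R v" by (simp add: w_def)
  thus ?thesis using that v c_def by blast
qed

lemma symmetric_matrix_orthonormal_eigenbasis:
  fixes A :: "real^'n^'n"
  assumes sym: "transpose A = A"
  obtains B \<mu> where "orthonormal_eigenbasis B A \<mu>"
proof -
  let ?eigen = "\<lambda>b. norm b = 1 \<and> A *v b = (b \<bullet> (A *v b)) *\<^sub>R b"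
  have "\<exists>B. finite B \<and> card B = n \<and> pairwise orthogonal B \<and> (\<forall>b\<in>B. ?eigen b)"
    if "n \<le> CARD('n)" for n
    using that
  proof (induction n)
    case 0
    show ?case by (intro exI[of _ "{}"]) simp
  next
    case (Suc n)
    then obtain B where B: "finite B" "card B = n" "pairwise orthogonal B" "\<forall>b\<in>B. ?eigen b"
      by (auto simp: Suc_le_eq)
    define S where "S = {x. \<forall>b\<in>B. orthogonal b x}"
    have S: "subspace S"
      by (auto simp: subspace_def S_def orthogonal_clauses)
    have inv: "A *v x \<in> S" if "x \<in> S" for x
    proof -
      have "b \<bullet> (A *v x) = (b \<bullet> (A *v b)) * (x \<bullet> b)" if "b \<in> B" for b
        using B(4) that symmetric_inner_swap[OF sym, of b x] by (metis inner_scaleR_right)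
      thus ?thesis using \<open>x \<in> S\<close> by (simp add: S_def orthogonal_def inner_commute)
    qed
    have "dim B < DIM(real^'n)" using dim_le_card'[OF B(1)] B(2) Suc.prems by simp
    then obtain x where "x \<noteq> 0" "\<And>y. y \<in> span B \<Longrightarrow> orthogonal x y"
      using orthogonal_to_subspace_exists by blast
    hence "x \<in> S" "x \<noteq> 0"
      by (auto simp: S_def orthogonal_commute span_base)
    then obtain v where v: "v \<in> S" "?eigen v"
      using symmetric_matrix_eigenvector_in_invariant_subspace[OF sym S inv] by blast
    have "v \<notin> B" using v by (auto simp: S_def orthogonal_def)
    hence "card (insert v B) = Suc n" using B by simp
    moreover have "pairwise orthogonal (insert v B)"
      using B(3) v(1) by (auto simp: pairwise_insert S_def orthogonal_commute)
    ultimately show ?case using B v by (intro exI[of _ "insert v B"]) auto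
  qed
  then obtain B where B: "finite B" "card B = CARD('n)" "pairwise orthogonal B" "\<forall>b\<in>B. ?eigen b"
    by blast
  have "independent B"
    using B by (intro pairwise_orthogonal_independent) auto
  hence "span B = UNIV"
    using card_ge_dim_independent[of B UNIV] B(2) by auto
  hence "orthonormal_eigenbasis B A (\<lambda>b. b \<bullet> (A *v b))"
    using B by (simp add: orthonormal_eigenbasis_def orthonormal_basis_def)
  thus ?thesis by (rule that)
qed

section \<open>Functions of a matrix inside a matrix algebra\<close>

lemma matrix_closed_set_subspace: "matrix_closed_set K \<Longrightarrow> subspace K"
  unfolding matrix_closed_set_def subspace_def by (metis scale_zero_left)

lemma matrix_closed_set_interpolation:
  fixes S :: "real^'n^'n"
  assumes K: "matrix_closed_set K" and "S \<in> K" and "finite L"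
  shows "\<exists>T\<in>K. \<forall>v l. S *v v = l *\<^sub>R v \<longrightarrow> l \<in> L \<longrightarrow> T *v v = g l *\<^sub>R v"
  using \<open>finite L\<close>
proof (induction L arbitrary: g rule: finite_induct)
  case empty
  show ?case using K by (auto simp: matrix_closed_set_def)
next
  case (insert a L)
  \<comment> \<open>Newton interpolation: recurse on the divided differences of \<open>g\<close> at \<open>a\<close>\<close>
  obtain T where T: "T \<in> K"
    "\<forall>v l. S *v v = l *\<^sub>R v \<longrightarrow> l \<in> L \<longrightarrow> T *v v = ((g l - g a) / (l - a)) *\<^sub>R v"
    using insert.IH[of "\<lambda>l. (g l - g a) / (l - a)"] by blast
  define T' where "T' = T ** (S - a *\<^sub>R mat 1) + g a *\<^sub>R mat 1"
  have "T' \<in> K"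
    using K \<open>S \<in> K\<close> T(1) matrix_closed_set_subspace[OF K]
    unfolding T'_def matrix_closed_set_def by (simp add: subspace_diff)
  moreover have "T' *v v = g l *\<^sub>R v" if "S *v v = l *\<^sub>R v" "l \<in> insert a L" for v l
  proof -
    have "T' *v v = (l - a) *\<^sub>R (T *v v) + g a *\<^sub>R v"
      using that(1) by (simp add: T'_def matrix_vector_mul_assoc[symmetric] algebra_simps
          scaleR_matrix_vector_assoc[symmetric])
    moreover have "T *v v = ((g l - g a) / (l - a)) *\<^sub>R v" if "l \<noteq> a"
      using that \<open>S *v v = l *\<^sub>R v\<close> \<open>l \<in> insert a L\<close> T(2) by blast
    ultimately show ?thesis by (cases "l = a") (auto simp: scaleR_add_left[symmetric])
  qed
  ultimately show ?case by blast
qed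

lemma matrix_closed_set_eigenbasis_function:
  assumes K: "matrix_closed_set K" and "S \<in> K" and S: "orthonormal_eigenbasis B S \<mu>"
  obtains T where "T \<in> K" "orthonormal_eigenbasis B T (\<lambda>b. g (\<mu> b))"
proof -
  have "finite (\<mu> ` B)" using S by (simp add: orthonormal_eigenbasis_def orthonormal_basis_def)
  from matrix_closed_set_interpolation[OF K \<open>S \<in> K\<close> this, of g]
  obtain T where "T \<in> K" "\<forall>v l. S *v v = l *\<^sub>R v \<longrightarrow> l \<in> \<mu> ` B \<longrightarrow> T *v v = g l *\<^sub>R v"
    by blast
  thus ?thesis using S that by (auto simp: orthonormal_eigenbasis_def)
qed

section \<open>Positive (semi)definite matrices\<close>

lemma pd_imp_psd: "pd A \<Longrightarrow> psd A"
  unfolding pd_def psd_def by (metis inner_zero_left less_eq_real_def)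

lemma psd_add_nonneg_scaleR:
  assumes "psd A" "psd B" "0 \<le> t"
  shows "psd (A + t *\<^sub>R B)"
  using assms unfolding psd_def
  by (auto simp: transpose_add transpose_scalar matrix_vector_mult_add_rdistrib
      scaleR_matrix_vector_assoc[symmetric] inner_add_right)

lemma psd_eigenvalue_nonneg:
  "psd A \<Longrightarrow> orthonormal_eigenbasis B A \<mu> \<Longrightarrow> b \<in> B \<Longrightarrow> 0 \<le> \<mu> b"
  by (simp add: orthonormal_eigenbasis_eigenvalue psd_def)

lemma pd_eigenvalue_pos:
  assumes "pd A" "orthonormal_eigenbasis B A \<mu>" "b \<in> B"
  shows "0 < \<mu> b"
proof -
  have "b \<noteq> 0" using assms(2,3) by (auto simp: orthonormal_eigenbasis_def orthonormal_basis_def)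
  thus ?thesis using assms by (simp add: orthonormal_eigenbasis_eigenvalue pd_def)
qed

lemma closed_psd: "closed {A :: real^'n^'n. psd A}"
proof -
  have quadratic_form: "x \<bullet> (A *v x) = A \<bullet> (\<chi> i j. x $ i * x $ j)" for x and A :: "real^'n^'n"
    unfolding inner_vec_def matrix_vector_mult_def
    by (simp add: sum_distrib_left mult_ac)
  have psd_set: "{A :: real^'n^'n. psd A} =
      (\<Inter>i j. {A. A $ i $ j = A $ j $ i}) \<inter> (\<Inter>x. {A. 0 \<le> A \<bullet> (\<chi> i j. x $ i * x $ j)})"
    by (auto simp: psd_def quadratic_form transpose_def vec_eq_iff)
  have "closed {A :: real^'n^'n. A $ i $ j = A $ j $ i}" for i j
    by (intro closed_Collect_eq continuous_on_component continuous_on_id)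
  moreover have "closed {A :: real^'n^'n. 0 \<le> A \<bullet> (\<chi> i j. x $ i * x $ j)}" for x
    by (intro closed_Collect_le continuous_intros)
  ultimately show ?thesis unfolding psd_set by (intro closed_Int closed_INT) auto
qed

lemma inner_pd_psd_nonneg: "pd M \<Longrightarrow> psd N \<Longrightarrow> 0 \<le> M \<bullet> N"
  and inner_pd_psd_pos: "pd M \<Longrightarrow> psd N \<Longrightarrow> N \<noteq> 0 \<Longrightarrow> 0 < M \<bullet> N"
proof -
  assume M: "pd M" and N: "psd N"
  obtain B \<mu> where B: "orthonormal_eigenbasis B N \<mu>"
    using symmetric_matrix_orthonormal_eigenbasis N by (auto simp: psd_def)
  have basis: "finite B" "\<And>b. b \<in> B \<Longrightarrow> b \<noteq> 0"
    using B by (auto simp: orthonormal_eigenbasis_def orthonormal_basis_def)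
  have "M \<bullet> N = trace (M ** N)"
    using M by (simp add: pd_def trace_symmetric_mult_eq_inner)
  also have "\<dots> = (\<Sum>b\<in>B. b \<bullet> ((M ** N) *v b))"
    using B orthonormal_basis_trace by (auto simp: orthonormal_eigenbasis_def)
  also have "\<dots> = (\<Sum>b\<in>B. \<mu> b * (b \<bullet> (M *v b)))"
    using B by (intro sum.cong) (auto simp: orthonormal_eigenbasis_def
        matrix_vector_mul_assoc[symmetric] matrix_vector_mult_scaleR)
  finally have MN: "M \<bullet> N = (\<Sum>b\<in>B. \<mu> b * (b \<bullet> (M *v b)))" .
  have term_pos: "0 < b \<bullet> (M *v b)" if "b \<in> B" for b
    using M basis(2)[OF that] by (simp add: pd_def)
  have term_nonneg: "0 \<le> \<mu> b * (b \<bullet> (M *v b))" if "b \<in> B" for b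
    using psd_eigenvalue_nonneg[OF N B that] term_pos[OF that] by simp
  show "0 \<le> M \<bullet> N" unfolding MN using term_nonneg by (rule sum_nonneg)
  assume "N \<noteq> 0"
  then obtain c where c: "c \<in> B" "\<mu> c \<noteq> 0"
    using orthonormal_basis_matrix_eqI[of B N 0] B by (force simp: orthonormal_eigenbasis_def)
  have "0 < \<mu> c * (c \<bullet> (M *v c))"
    using psd_eigenvalue_nonneg[OF N B c(1)] c(2) term_pos[OF c(1)] by simp
  thus "0 < M \<bullet> N" unfolding MN using basis(1) c(1) term_nonneg by (intro sum_pos2) auto
qed

lemma pd_quadratic_form_lower_bound:
  fixes Q :: "real^'n^'n"
  assumes "pd Q"
  obtains m where "0 < m" "\<And>x. m * (x \<bullet> x) \<le> x \<bullet> (Q *v x)"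
proof -
  obtain B \<mu> where B: "orthonormal_eigenbasis B Q \<mu>"
    using symmetric_matrix_orthonormal_eigenbasis assms by (auto simp: pd_def)
  have fin: "finite B" using B by (simp add: orthonormal_eigenbasis_def orthonormal_basis_def)
  define m where "m = Min (insert 1 (\<mu> ` B))"
  have "0 < m" using fin pd_eigenvalue_pos[OF assms B] by (simp add: m_def)
  moreover have "m * (x \<bullet> x) \<le> x \<bullet> (Q *v x)" for x
  proof -
    have "orthonormal_eigenbasis B (mat 1) (\<lambda>_. 1)"
      using B by (simp add: orthonormal_eigenbasis_def)
    from orthonormal_eigenbasis_quadratic_form[OF this, of x x]
    have "m * (x \<bullet> x) = (\<Sum>b\<in>B. m * ((x \<bullet> b) * (x \<bullet> b)))"
      by (simp add: sum_distrib_left mult.assoc)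
    also have "\<dots> \<le> (\<Sum>b\<in>B. \<mu> b * ((x \<bullet> b) * (x \<bullet> b)))"
      using fin by (intro sum_mono mult_right_mono) (auto simp: m_def)
    also have "\<dots> = x \<bullet> (Q *v x)"
      by (simp add: orthonormal_eigenbasis_quadratic_form[OF B] mult.assoc)
    finally show ?thesis .
  qed
  ultimately show ?thesis by (rule that)
qed

lemma pd_perturbation_psd:
  fixes Q D :: "real^'n^'n"
  assumes "pd Q" and D: "transpose D = D"
  obtains \<delta> where "0 < \<delta>" "\<And>t. \<bar>t\<bar> < \<delta> \<Longrightarrow> psd (Q + t *\<^sub>R D)"
proof -
  obtain m where m: "0 < m" "\<And>x. m * (x \<bullet> x) \<le> x \<bullet> (Q *v x)"
    using pd_quadratic_form_lower_bound[OF assms(1)] by blast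
  obtain C where C: "0 < C" "\<And>x. norm (D *v x) \<le> norm x * C"
    using bounded_linear.pos_bounded[OF matrix_vector_mul_bounded_linear[of D]] by blast
  have "psd (Q + t *\<^sub>R D)" if t: "\<bar>t\<bar> < m / C" for t
    unfolding psd_def
  proof (intro conjI allI)
    show "transpose (Q + t *\<^sub>R D) = Q + t *\<^sub>R D"
      using assms by (simp add: pd_def transpose_add transpose_scalar)
    fix x
    have "\<bar>t * (x \<bullet> (D *v x))\<bar> \<le> \<bar>t\<bar> * (norm x * (norm x * C))"
      unfolding abs_mult
      by (intro mult_left_mono order.trans[OF Cauchy_Schwarz_ineq2] C(2)) auto
    also have "\<dots> = (\<bar>t\<bar> * C) * (x \<bullet> x)"
      by (simp add: dot_square_norm power2_eq_square mult_ac)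
    also have "\<dots> \<le> m * (x \<bullet> x)"
      using t C(1) by (intro mult_right_mono) (simp_all add: field_simps)
    finally have "- (m * (x \<bullet> x)) \<le> t * (x \<bullet> (D *v x))" by linarith
    thus "0 \<le> x \<bullet> ((Q + t *\<^sub>R D) *v x)"
      using m(2)[of x] by (simp add: matrix_vector_mult_add_rdistrib
          scaleR_matrix_vector_assoc[symmetric] inner_add_right)
  qed
  moreover have "0 < m / C" using m(1) C(1) by simp
  ultimately show ?thesis using that by blast
qed

lemma pd_matrix_inv:
  fixes A :: "real^'n^'n"
  assumes "pd A"
  shows "A ** matrix_inv A = mat 1" "matrix_inv A ** A = mat 1"
proof -
  have "\<forall>x. A *v x = 0 \<longrightarrow> x = 0"
    using assms unfolding pd_def by (metis inner_zero_right less_irrefl)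
  then obtain B where BA: "B ** A = mat 1" using matrix_left_invertible_ker by blast
  hence AB: "A ** B = mat 1" using matrix_left_right_inverse by blast
  hence "matrix_inv A = B" by (rule matrix_inv_eqI)
  thus "A ** matrix_inv A = mat 1" "matrix_inv A ** A = mat 1" using AB BA by simp_all
qed

lemma pd_matrix_inv_pd:
  fixes A :: "real^'n^'n"
  assumes "pd A"
  shows "pd (matrix_inv A)"
  unfolding pd_def
proof (intro conjI allI impI)
  have A: "transpose A = A" using assms by (simp add: pd_def)
  have "A ** transpose (matrix_inv A) = mat 1"
    using pd_matrix_inv(2)[OF assms] matrix_transpose_mul[of "matrix_inv A" A] A by simp
  thus "transpose (matrix_inv A) = matrix_inv A" by (rule matrix_inv_eqI[symmetric])
  fix y :: "real^'n" assume "y \<noteq> 0"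
  define z where "z = matrix_inv A *v y"
  have Az: "A *v z = y" using pd_matrix_inv(1)[OF assms] by (simp add: z_def matrix_vector_mul_assoc)
  hence "z \<noteq> 0" using \<open>y \<noteq> 0\<close> by auto
  hence "0 < z \<bullet> (A *v z)" using assms by (simp add: pd_def)
  thus "0 < y \<bullet> (matrix_inv A *v y)" using Az by (simp add: z_def inner_commute)
qed

lemma quadratic_form_congruence:
  "x \<bullet> ((transpose X ** (C ** X)) *v x) = (X *v x) \<bullet> (C *v (X *v (x::real^'n)))"
  using inner_transpose_matrix[of x X "C *v (X *v x)"]
  by (simp add: matrix_vector_mul_assoc[symmetric] del: transpose_matrix_vector)

lemma psd_congruence:
  assumes "pd C"
  shows "psd (transpose X ** (C ** X))"
  unfolding psd_def
proof (intro conjI allI)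
  show "transpose (transpose X ** (C ** X)) = transpose X ** (C ** X)"
    using assms by (simp add: pd_def matrix_transpose_mul matrix_mul_assoc)
  fix x
  have "0 \<le> (X *v x) \<bullet> (C *v (X *v x))"
    using assms by (cases "X *v x = 0") (auto simp: pd_def less_imp_le)
  thus "0 \<le> x \<bullet> ((transpose X ** (C ** X)) *v x)" by (simp only: quadratic_form_congruence)
qed

lemma congruence_eq_0_iff:
  assumes "pd C"
  shows "transpose X ** (C ** X) = 0 \<longleftrightarrow> X = 0"
proof
  assume "transpose X ** (C ** X) = 0"
  hence "(X *v x) \<bullet> (C *v (X *v x)) = 0" for x
    using quadratic_form_congruence[of x X C] by simp
  hence "X *v x = 0" for x using assms unfolding pd_def by (metis less_irrefl)
  thus "X = 0" by (simp add: matrix_eq)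
qed simp

lemma matrix_closed_set_pd_sqrt:
  fixes Q :: "real^'n^'n"
  assumes K: "matrix_closed_set K" and "Q \<in> K" "pd Q"
  obtains P where "P \<in> K" "pd P" "P ** P = Q" "matrix_inv P \<in> K"
proof -
  obtain B \<mu> where B: "orthonormal_eigenbasis B Q \<mu>"
    using symmetric_matrix_orthonormal_eigenbasis assms(3) by (auto simp: pd_def)
  have \<mu>: "0 < \<mu> b" if "b \<in> B" for b using pd_eigenvalue_pos[OF assms(3) B that] .
  obtain P where P: "P \<in> K" "orthonormal_eigenbasis B P (\<lambda>b. sqrt (\<mu> b))"
    using matrix_closed_set_eigenbasis_function[OF K \<open>Q \<in> K\<close> B, where g = sqrt] .
  obtain R where R: "R \<in> K" "orthonormal_eigenbasis B R (\<lambda>b. 1 / sqrt (\<mu> b))"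
    using matrix_closed_set_eigenbasis_function[OF K \<open>Q \<in> K\<close> B, where g = "\<lambda>l. 1 / sqrt l"] .
  have onb: "orthonormal_basis B" using B by (simp add: orthonormal_eigenbasis_def)
  have "pd P" using \<mu> by (intro orthonormal_eigenbasis_pd[OF P(2)]) simp
  moreover have "P ** P = Q"
  proof (rule orthonormal_basis_matrix_eqI[OF onb])
    fix b assume "b \<in> B"
    thus "(P ** P) *v b = Q *v b"
      using B P(2) \<mu>[OF \<open>b \<in> B\<close>] by (simp add: orthonormal_eigenbasis_def
          matrix_vector_mul_assoc[symmetric] matrix_vector_mult_scaleR)
  qed
  moreover have "P ** R = mat 1"
  proof (rule orthonormal_basis_matrix_eqI[OF onb])
    fix b assume "b \<in> B"
    thus "(P ** R) *v b = mat 1 *v b"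
      using R(2) P(2) \<mu>[OF \<open>b \<in> B\<close>] by (simp add: orthonormal_eigenbasis_def
          matrix_vector_mul_assoc[symmetric] matrix_vector_mult_scaleR)
  qed
  ultimately show ?thesis using that P(1) R(1) matrix_inv_eqI[of P R] by simp
qed

section \<open>Nearest points\<close>

lemma nearest_point_perturbation:
  fixes M Q E :: "'a::real_inner"
  assumes "\<And>Y. Y \<in> S \<Longrightarrow> dist M Q \<le> dist M Y" and "Q + t *\<^sub>R E \<in> S"
  shows "t * (2 * ((M - Q) \<bullet> E)) \<le> t\<^sup>2 * (E \<bullet> E)"
proof -
  have "norm (M - Q) \<le> norm ((M - Q) - t *\<^sub>R E)"
    using assms by (simp add: dist_norm algebra_simps)
  hence "(M - Q) \<bullet> (M - Q) \<le> ((M - Q) - t *\<^sub>R E) \<bullet> ((M - Q) - t *\<^sub>R E)"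
    by (simp add: power2_norm_eq_inner[symmetric] power_mono)
  thus ?thesis
    by (simp add: inner_commute power2_eq_square algebra_simps)
qed

lemma nearest_point_variational_inequality:
  fixes M Q E :: "'a::real_inner"
  assumes "\<And>Y. Y \<in> S \<Longrightarrow> dist M Q \<le> dist M Y"
    and "0 < \<delta>" and "\<And>t. 0 < t \<Longrightarrow> t < \<delta> \<Longrightarrow> Q + t *\<^sub>R E \<in> S"
  shows "(M - Q) \<bullet> E \<le> 0"
proof -
  have "2 * ((M - Q) \<bullet> E) \<le> 0"
    by (rule nonpos_if_le_quadratic[OF \<open>0 < \<delta>\<close>])
      (rule nearest_point_perturbation[OF assms(1) assms(3)])
  thus ?thesis by simp
qed

lemma nearest_point_orthogonal:
  fixes M Q D :: "'a::real_inner"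
  assumes "\<And>Y. Y \<in> S \<Longrightarrow> dist M Q \<le> dist M Y"
    and "0 < \<delta>" and "\<And>t. \<bar>t\<bar> < \<delta> \<Longrightarrow> Q + t *\<^sub>R D \<in> S"
  shows "(M - Q) \<bullet> D = 0"
proof -
  have "2 * ((M - Q) \<bullet> D) = 0"
    by (rule zero_if_le_quadratic[OF \<open>0 < \<delta>\<close>])
      (rule nearest_point_perturbation[OF assms(1) assms(3)])
  thus ?thesis by simp
qed

lemma frob_proj_eqI:
  assumes "Q \<in> \<H>" and orth: "\<And>Y. Y \<in> \<H> \<Longrightarrow> (M - Q) \<bullet> (Q - Y) = 0"
  shows "frob_proj \<H> M = Q"
proof -
  have pythagoras: "frob_norm_sq (M - Y) = frob_norm_sq (M - Q) + frob_norm_sq (Q - Y)"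
    if "Y \<in> \<H>" for Y
  proof -
    have "orthogonal (M - Q) (Q - Y)" using orth[OF that] by (simp add: orthogonal_def)
    from norm_add_Pythagorean[OF this] show ?thesis by (simp add: frob_norm_sq_eq_norm)
  qed
  show ?thesis
    unfolding frob_proj_def
  proof (rule the_equality)
    have "frob_norm_sq (M - Q) \<le> frob_norm_sq (M - Y)" if "Y \<in> \<H>" for Y
      using pythagoras[OF that] by (simp add: frob_norm_sq_eq_norm)
    thus "Q \<in> \<H> \<and> (\<forall>Y. Y \<in> \<H> \<longrightarrow> frob_norm_sq (M - Q) \<le> frob_norm_sq (M - Y))"
      using \<open>Q \<in> \<H>\<close> by blast
  next
    fix Y assume Y: "Y \<in> \<H> \<and> (\<forall>Y'. Y' \<in> \<H> \<longrightarrow> frob_norm_sq (M - Y) \<le> frob_norm_sq (M - Y'))"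
    hence "frob_norm_sq (M - Y) \<le> frob_norm_sq (M - Q)" using \<open>Q \<in> \<H>\<close> by blast
    hence "frob_norm_sq (Q - Y) \<le> 0" using pythagoras[of Y] Y by linarith
    thus "Y = Q" by (simp add: frob_norm_sq_eq_norm)
  qed
qed

lemma nearest_psd_point_pd:
  fixes M Q :: "real^'n^'n"
  assumes K: "matrix_closed_set K" and "pd M" and Q: "Q \<in> {A. psd A} \<inter> K"
    and nearest: "\<And>Y. Y \<in> {A. psd A} \<inter> K \<Longrightarrow> dist M Q \<le> dist M Y"
  shows "pd Q"
proof -
  have "transpose Q = Q" using Q by (simp add: psd_def)
  then obtain B \<mu> where B: "orthonormal_eigenbasis B Q \<mu>"
    using symmetric_matrix_orthonormal_eigenbasis by blast
  have "0 < \<mu> b" if "b \<in> B" for b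
  proof (rule ccontr)
    assume "\<not> 0 < \<mu> b"
    hence "\<mu> b = 0" using psd_eigenvalue_nonneg[OF _ B that] Q by force
    \<comment> \<open>\<open>E\<close> is the orthogonal projector onto the kernel of \<open>Q\<close>\<close>
    define g :: "real \<Rightarrow> real" where "g l = (if l = 0 then 1 else 0)" for l
    obtain E where E: "E \<in> K" "orthonormal_eigenbasis B E (\<lambda>b. g (\<mu> b))"
      using matrix_closed_set_eigenbasis_function[OF K _ B, where g = g] Q by blast
    have "psd E" by (rule orthonormal_eigenbasis_psd[OF E(2)]) (simp add: g_def)
    have "E *v b = b" using E(2) \<open>b \<in> B\<close> \<open>\<mu> b = 0\<close> by (simp add: orthonormal_eigenbasis_def g_def)
    moreover have "b \<noteq> 0"
      using B \<open>b \<in> B\<close> by (auto simp: orthonormal_eigenbasis_def orthonormal_basis_def)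
    ultimately have "E \<noteq> 0" by auto
    have "Q ** E = 0"
    proof (rule orthonormal_basis_matrix_eqI)
      show "orthonormal_basis B" using B by (simp add: orthonormal_eigenbasis_def)
      fix c assume "c \<in> B"
      thus "(Q ** E) *v c = 0 *v c" using B E(2)
        by (simp add: orthonormal_eigenbasis_def matrix_vector_mul_assoc[symmetric]
            matrix_vector_mult_scaleR g_def)
    qed
    hence "Q \<bullet> E = 0"
      using \<open>transpose Q = Q\<close> by (simp add: trace_symmetric_mult_eq_inner[symmetric] trace_def)
    have perturbed: "Q + t *\<^sub>R E \<in> {A. psd A} \<inter> K" if "0 < t" for t
      using Q E(1) \<open>psd E\<close> that psd_add_nonneg_scaleR[of Q E t] matrix_closed_set_subspace[OF K]
      by (simp add: subspace_add subspace_scale)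
    have "(M - Q) \<bullet> E \<le> 0"
      using nearest_point_variational_inequality[where S = "{A. psd A} \<inter> K", OF nearest zero_less_one]
        perturbed by blast
    moreover have "0 < M \<bullet> E" using inner_pd_psd_pos[OF \<open>pd M\<close> \<open>psd E\<close> \<open>E \<noteq> 0\<close>] .
    ultimately show False using \<open>Q \<bullet> E = 0\<close> by (simp add: inner_diff_left)
  qed
  thus ?thesis by (rule orthonormal_eigenbasis_pd[OF B])
qed

lemma nearest_pd_point_orthogonal:
  fixes M Q D :: "real^'n^'n"
  assumes K: "matrix_closed_set K" and Q: "Q \<in> K" "pd Q"
    and nearest: "\<And>Y. Y \<in> {A. psd A} \<inter> K \<Longrightarrow> dist M Q \<le> dist M Y"
    and D: "D \<in> K" "transpose D = D"
  shows "(M - Q) \<bullet> D = 0"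
proof -
  obtain \<delta> where "0 < \<delta>" and psd: "\<And>t. \<bar>t\<bar> < \<delta> \<Longrightarrow> psd (Q + t *\<^sub>R D)"
    using pd_perturbation_psd[OF Q(2) D(2)] by blast
  have "Q + t *\<^sub>R D \<in> K" for t
    using Q(1) D(1) matrix_closed_set_subspace[OF K] by (simp add: subspace_add subspace_scale)
  thus ?thesis
    using nearest_point_orthogonal[where S = "{A. psd A} \<inter> K", OF nearest \<open>0 < \<delta>\<close>] psd by blast
qed

section \<open>The preconditioner\<close>

context
  fixes K :: "(real^'n^'n) set" and M P :: "real^'n^'n"
  assumes K: "matrix_closed_set K" and M: "pd M" and P: "P \<in> K" "pd P" "matrix_inv P \<in> K"
    and orth: "\<And>D. D \<in> K \<Longrightarrow> transpose D = D \<Longrightarrow> M \<bullet> D = (P ** P) \<bullet> D"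
begin

lemma precond_objective_decomposition:
  assumes A: "A \<in> K" "pd A"
  defines "X \<equiv> A ** matrix_inv P - mat 1"
  shows "frob_inner M (matrix_inv A) + trace A
    = M \<bullet> (transpose X ** (matrix_inv A ** X)) + 2 * trace P"
proof -
  define R where "R = matrix_inv P"
  define Ai where "Ai = matrix_inv A"
  have PR: "P ** R = mat 1" and RP: "R ** P = mat 1"
    and AAi: "A ** Ai = mat 1" and AiA: "Ai ** A = mat 1"
    using pd_matrix_inv P(2) A(2) by (auto simp: R_def Ai_def)
  have PR_cancel: "P ** (R ** B) = B" and RP_cancel: "R ** (P ** B) = B" for B :: "real^'n^'n"
    using PR RP by (simp_all add: matrix_mul_assoc)
  have sym: "transpose P = P" "transpose R = R" "transpose A = A"
    using P(2) pd_matrix_inv_pd[OF P(2)] A(2) by (auto simp: pd_def R_def)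
  have PP_sym: "transpose (P ** P) = P ** P" by (simp add: matrix_transpose_mul sym)
  have "transpose X ** (Ai ** X) = (R ** A - mat 1) ** (R - Ai)"
    using AiA by (simp add: X_def R_def[symmetric] transpose_diff matrix_transpose_mul sym
        matrix_diff_ldistrib matrix_mul_assoc)
  also have "\<dots> = R ** A ** R - R - R + Ai"
    using AAi by (simp add: matrix_diff_ldistrib matrix_diff_rdistrib matrix_mul_assoc[symmetric])
  finally have N: "transpose X ** (Ai ** X) = R ** A ** R - R - R + Ai" .
  have RK: "R \<in> K" using P(3) by (simp add: R_def)
  have "R ** A ** R \<in> K" using K RK A(1) by (simp add: matrix_closed_set_def)
  moreover have "transpose (R ** A ** R) = R ** A ** R"
    by (simp add: matrix_transpose_mul sym matrix_mul_assoc)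
  ultimately have "M \<bullet> (R ** A ** R) = (P ** P) \<bullet> (R ** A ** R)" by (rule orth)
  also have "\<dots> = trace ((P ** P) ** (R ** A ** R))"
    using PP_sym by (simp add: trace_symmetric_mult_eq_inner)
  also have "\<dots> = trace ((P ** A) ** R)"
    by (simp add: matrix_mul_assoc[symmetric] PR_cancel)
  also have "\<dots> = trace A"
    by (simp add: trace_mul_sym[of _ R] RP_cancel)
  finally have RAR: "M \<bullet> (R ** A ** R) = trace A" .
  have "M \<bullet> R = (P ** P) \<bullet> R" using orth RK sym by blast
  also have "\<dots> = trace ((P ** P) ** R)" using PP_sym by (simp add: trace_symmetric_mult_eq_inner)
  also have "\<dots> = trace P" by (simp add: matrix_mul_assoc[symmetric] PR)
  finally have "M \<bullet> R = trace P" .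
  have "M \<bullet> (transpose X ** (Ai ** X)) = M \<bullet> (R ** A ** R) - M \<bullet> R - M \<bullet> R + M \<bullet> Ai"
    by (simp only: N inner_diff_right inner_add_right)
  thus ?thesis using RAR \<open>M \<bullet> R = trace P\<close> by (simp add: frob_inner_eq_inner Ai_def)
qed

lemma precond_P_eqI: "precond_P ({A. psd A} \<inter> K) M = P"
proof -
  let ?obj = "\<lambda>A. frob_inner M (matrix_inv A) + trace A"
  let ?X = "\<lambda>A. A ** matrix_inv P - mat 1"
  let ?N = "\<lambda>A. transpose (?X A) ** (matrix_inv A ** ?X A)"
  have psd_N: "psd (?N A)" if "pd A" for A
    using psd_congruence[OF pd_matrix_inv_pd[OF that]] .
  have obj_ge: "2 * trace P \<le> ?obj A" if "A \<in> K" "pd A" for A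
    using precond_objective_decomposition[OF that] inner_pd_psd_nonneg[OF M psd_N[OF \<open>pd A\<close>]]
    by simp
  have obj_eq: "A = P" if "A \<in> K" "pd A" "?obj A \<le> 2 * trace P" for A
  proof -
    have "M \<bullet> ?N A \<le> 0" using precond_objective_decomposition[OF that(1,2)] that(3) by simp
    hence "?N A = 0" using inner_pd_psd_pos[OF M psd_N[OF \<open>pd A\<close>]] by fastforce
    hence "?X A = 0" using congruence_eq_0_iff[OF pd_matrix_inv_pd[OF \<open>pd A\<close>], of "?X A"] by blast
    hence "A ** matrix_inv P = mat 1" by simp
    hence "A = A ** (matrix_inv P ** P)" using pd_matrix_inv(2)[OF P(2)] by simp
    thus "A = P" using \<open>A ** matrix_inv P = mat 1\<close> by (simp add: matrix_mul_assoc)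
  qed
  have "?obj P = 2 * trace P"
    using precond_objective_decomposition[OF P(1,2)] pd_matrix_inv(1)[OF P(2)] by simp
  show ?thesis
    unfolding precond_P_def
  proof (rule the_equality)
    show "P \<in> {A. psd A} \<inter> K \<and> pd P \<and>
        (\<forall>H'. H' \<in> {A. psd A} \<inter> K \<and> pd H' \<longrightarrow> ?obj P \<le> ?obj H')"
      using P(1,2) pd_imp_psd[OF P(2)] obj_ge \<open>?obj P = 2 * trace P\<close> by auto
  next
    fix A assume "A \<in> {A. psd A} \<inter> K \<and> pd A \<and>
        (\<forall>H'. H' \<in> {A. psd A} \<inter> K \<and> pd H' \<longrightarrow> ?obj A \<le> ?obj H')"
    thus "A = P"
      using P(1,2) pd_imp_psd[OF P(2)] obj_eq \<open>?obj P = 2 * trace P\<close> by auto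
  qed
qed

end

theorem lemmaA4:
  fixes \<H> :: "(real^'d^'d) set" and M :: "real^'d^'d"
  assumes "well_structured \<H>"
    and "pd M"
  shows "frob_proj \<H> M = precond_P \<H> M ** precond_P \<H> M"
proof -
  obtain K where K: "matrix_closed_set K" and H: "\<H> = {A. psd A} \<inter> K"
    using assms(1) by (auto simp: well_structured_def)
  have "closed \<H>"
    unfolding H using closed_psd closed_subspace[OF matrix_closed_set_subspace[OF K]] by (rule closed_Int)
  moreover have "mat 1 \<in> \<H>" using K by (simp add: H psd_def matrix_closed_set_def)
  ultimately obtain Q where Q: "Q \<in> \<H>" and nearest: "\<And>Y. Y \<in> \<H> \<Longrightarrow> dist M Q \<le> dist M Y"
    using distance_attains_inf[of \<H> M] by blast
  have "pd Q" using nearest_psd_point_pd[OF K assms(2)] Q nearest unfolding H by blast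
  have orth: "(M - Q) \<bullet> D = 0" if "D \<in> K" "transpose D = D" for D
    using nearest_pd_point_orthogonal[OF K _ \<open>pd Q\<close> _ that] Q nearest unfolding H by blast
  have "frob_proj \<H> M = Q"
  proof (rule frob_proj_eqI[OF Q])
    fix Y assume "Y \<in> \<H>"
    thus "(M - Q) \<bullet> (Q - Y) = 0"
      using Q matrix_closed_set_subspace[OF K]
      by (intro orth) (auto simp: H psd_def transpose_diff subspace_diff)
  qed
  moreover obtain P where P: "P \<in> K" "pd P" "P ** P = Q" "matrix_inv P \<in> K"
    using matrix_closed_set_pd_sqrt[OF K _ \<open>pd Q\<close>] Q unfolding H by blast
  moreover have "precond_P \<H> M = P"
    unfolding H using precond_P_eqI[OF K assms(2) P(1,2,4)] orth P(3) by (simp add: inner_diff_left)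
  ultimately show ?thesis by simp
qed

end
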